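(* Let $k\ge1$, and let $\phi^1,\dots,\phi^k\in[0,1]^d$ be fixed feature attribution vectors (for a fixed input). Let $\mathcal{Q}(\phi)=\mathbb{E}_{\gamma_1,\gamma_2}\big[\lVert\gamma_1\phi-\gamma_2\rVert_2^2\big]$ be a generalized $L2$ metric given by random variables $\gamma_1\in\mathbb{R}^{g\times d}$, $\gamma_2\in\mathbb{R}^g$, and suppose that for all realizations $\lVert\gamma_1\rVert_1\le c_1$ and $\lVert\gamma_1\phi^i-\gamma_2\rVert_2^2\le c_2$ for all $i=1,\dots,k$. Let $\Omega=\{\omega\in\mathbb{R}^k:\omega_i\ge0,\ \sum_{i=1}^k\omega_i=1\}$ and $\phi^{\omega}=\sum_{i=1}^k\omega_i\phi^i$. Let $(\gamma_1^{(j)},\gamma_2^{(j)})$, $j=1,\dots,m$, be i.i.d. samples with the distribution of $(\gamma_1,\gamma_2)$, and let $$\hat\omega\in\arg\min_{\omega\in\Omega}\frac1m\sum_{j=1}^m\lVert\gamma_1^{(j)}\phi^{\omega}-\gamma_2^{(j)}\rVert_2^2.$$ Then there exists a constant $C=C(c_1,c_2)>0$ depending on $c_1$ and $c_2$ such that for every $\delta\in(0,1)$, with probability at least $1-\delta$ over the samples, $$\mathcal{Q}(\phi^{\hat\omega})-\min_{\omega\in\Omega}\mathcal{Q}(\phi^{\omega})\le C\sqrt{\frac{4\log(16k/\delta)}{m}}.$$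
   Context: Feature attributions are normalized, i.e. take values in $[0,1]^d$. A generalized $L2$ metric is a map $\mathcal{Q}:\mathbb{R}^d\to\mathbb{R}$ of the form $\mathcal{Q}(\phi)=\mathbb{E}[\lVert\gamma_1\phi-\gamma_2\rVert_2^2]$ for random $\gamma_1\in\mathbb{R}^{g\times d}$, $\gamma_2\in\mathbb{R}^g$. Here $\lVert\gamma_1\rVert_1$ denotes the sum of the absolute values of the entries of the matrix $\gamma_1$ (so that every entry of $\gamma_1\phi$ is bounded by $\lVert\gamma_1\rVert_1\lVert\phi\rVert_\infty$), and $\log$ is the natural logarithm. *)

theory Defs
  imports "HOL-Probability.Probability"
begin

text \<open>Matrices in R^{g x d} are represented as functions nat => nat => real (entries A i j,
  i < g, j < d), vectors in R^g / R^d as nat => real with index guards.\<close>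

type_synonym mat = "nat \<Rightarrow> nat \<Rightarrow> real"
type_synonym vec = "nat \<Rightarrow> real"

definition sqloss :: "nat \<Rightarrow> nat \<Rightarrow> mat \<Rightarrow> vec \<Rightarrow> vec \<Rightarrow> real" where
  "sqloss g d A b \<phi> = (\<Sum>i<g. ((\<Sum>j<d. A i j * \<phi> j) - b i)\<^sup>2)"

definition mat_l1 :: "nat \<Rightarrow> nat \<Rightarrow> mat \<Rightarrow> real" where
  "mat_l1 g d A = (\<Sum>i<g. \<Sum>j<d. \<bar>A i j\<bar>)"

definition genL2 :: "nat \<Rightarrow> nat \<Rightarrow> (mat \<times> vec) measure \<Rightarrow> vec \<Rightarrow> real" where
  "genL2 g d D \<phi> = (\<integral>x. sqloss g d (fst x) (snd x) \<phi> \<partial>D)"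

definition empL2 :: "nat \<Rightarrow> nat \<Rightarrow> nat \<Rightarrow> (nat \<Rightarrow> mat \<times> vec) \<Rightarrow> vec \<Rightarrow> real" where
  "empL2 g d m S \<phi> = (1 / real m) * (\<Sum>j<m. sqloss g d (fst (S j)) (snd (S j)) \<phi>)"

definition wsimplex :: "nat \<Rightarrow> (nat \<Rightarrow> real) set" where
  "wsimplex k = {\<omega>. (\<forall>i<k. 0 \<le> \<omega> i) \<and> (\<Sum>i<k. \<omega> i) = 1}"

definition comb :: "nat \<Rightarrow> (nat \<Rightarrow> vec) \<Rightarrow> (nat \<Rightarrow> real) \<Rightarrow> vec" where
  "comb k \<phi> \<omega> = (\<lambda>j. \<Sum>i<k. \<omega> i * \<phi> i j)"

end

theory Submission
  imports Defs
begin

text \<open>Because the weights of \<open>\<omega>\<close> sum to one, \<open>\<gamma>\<^sub>1\<phi>\<^sup>\<omega> - \<gamma>\<^sub>2 = \<Sum>\<^sub>i \<omega>\<^sub>i (\<gamma>\<^sub>1\<phi>\<^sup>i - \<gamma>\<^sub>2)\<close>, so both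
  \<open>\<Q>(\<phi>\<^sup>\<omega>)\<close> and its empirical counterpart are the quadratic form
  \<open>\<Sum>\<^sub>i\<^sub>,\<^sub>l \<omega>\<^sub>i \<omega>\<^sub>l M\<^sub>i\<^sub>l\<close>, with \<open>M\<^sub>i\<^sub>l\<close> the population and sample mean of the
  inner product \<open>\<langle>\<gamma>\<^sub>1\<phi>\<^sup>i - \<gamma>\<^sub>2, \<gamma>\<^sub>1\<phi>\<^sup>l - \<gamma>\<^sub>2\<rangle>\<close>. By AM-GM these \<open>k\<^sup>2\<close> random variables are
  bounded by \<open>c\<^sub>2\<close>, so Hoeffding's inequality and a union bound estimate all coefficients to
  within \<open>t = c sqrt (2 ln (2k\<^sup>2/\<delta>) / m)\<close> with probability \<open>1 - \<delta>\<close>. On the simplex the two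
  quadratic forms then differ by at most \<open>t\<close>, and the empirical minimiser has excess risk at
  most \<open>2t\<close>.\<close>

lemma indep_vars_PiM_components:
  assumes M: "\<And>i. i \<in> I \<Longrightarrow> prob_space (M i)" and I: "I \<noteq> {}"
  shows "prob_space.indep_vars (PiM I M) M (\<lambda>i S. S i) I"
proof -
  interpret P: prob_space "PiM I M" using M by (rule prob_space_PiM)
  show ?thesis
  proof (subst P.indep_vars_iff_distr_eq_PiM'[OF I])
    have "distr (PiM I M) (PiM I M) (\<lambda>S. restrict S I) = distr (PiM I M) (PiM I M) (\<lambda>S. S)"
      by (rule distr_cong) (auto simp: space_PiM)
    also have "\<dots> = PiM I (\<lambda>i. distr (PiM I M) (M i) (\<lambda>S. S i))"
      by (auto intro!: PiM_cong simp: distr_PiM_component M)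
    finally show "distr (PiM I M) (PiM I M) (\<lambda>S. \<lambda>i\<in>I. S i) = PiM I (\<lambda>i. distr (PiM I M) (M i) (\<lambda>S. S i))"
      by simp
  qed simp
qed

lemma Hoeffding_PiM_abs_ge:
  fixes h :: "'a \<Rightarrow> real" and \<epsilon> :: real
  assumes D: "prob_space D" and h: "h \<in> borel_measurable D"
    and h_bounds: "\<And>x. x \<in> space D \<Longrightarrow> h x \<in> {a..b}" and "a < b"
    and I: "finite I" "I \<noteq> {}" and "\<epsilon> \<ge> 0"
  shows "measure (PiM I (\<lambda>_. D)) {S \<in> space (PiM I (\<lambda>_. D)).
           \<bar>(\<Sum>j\<in>I. h (S j)) / card I - integral\<^sup>L D h\<bar> \<ge> \<epsilon>}
         \<le> 2 * exp (-2 * card I * \<epsilon>\<^sup>2 / (b - a)\<^sup>2)"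
proof -
  let ?P = "PiM I (\<lambda>_. D)"
  obtain j0 where j0: "j0 \<in> I" using I by blast
  have component: "distr ?P D (\<lambda>S. S j) = D" if "j \<in> I" for j
    using distr_PiM_component[of I "\<lambda>_. D" j] D that by simp
  have distr_h: "distr ?P borel (\<lambda>S. h (S j)) = distr D borel h" if "j \<in> I" for j
    using distr_distr[of h D borel "\<lambda>S. S j" ?P, symmetric] h that
    by (simp add: component comp_def)
  interpret P: prob_space ?P using D by (rule prob_space_PiM)
  have h_component [measurable]: "(\<lambda>S. h (S j)) \<in> borel_measurable ?P" if "j \<in> I" for j
    using measurable_compose[OF measurable_component_singleton[OF that] h] by simp
  have mean: "P.expectation (\<lambda>S. h (S j0)) = integral\<^sup>L D h"
    using integral_distr[of "\<lambda>S. S j0" ?P D h] component[OF j0] h j0 by simp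
  interpret Hoeffding_ineq_iid ?P I "\<lambda>j S. h (S j)" "\<lambda>S. h (S j0)" a b "integral\<^sup>L D h"
  proof unfold_locales
    show "P.indep_vars (\<lambda>_. borel) (\<lambda>j S. h (S j)) I"
      using P.indep_vars_compose2[OF indep_vars_PiM_components[OF D I(2)], of "\<lambda>_. h" "\<lambda>_. borel"] h
      by simp
    show "AE S in ?P. h (S j0) \<in> {a..b}"
      using h_bounds j0 by (intro AE_I2) (auto simp: space_PiM)
  qed (use I(1) distr_h j0 mean in auto)
  show ?thesis
    using Hoeffding_ineq_abs_ge'[OF \<open>\<epsilon> \<ge> 0\<close> \<open>a < b\<close> I(2)] by simp
qed

lemma Hoeffding_PiM_uniform:
  fixes f :: "'i \<Rightarrow> 'a \<Rightarrow> real" and c \<delta> :: real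
  assumes D: "prob_space D"
    and f: "\<And>i. i \<in> K \<Longrightarrow> f i \<in> borel_measurable D"
    and f_bound: "\<And>i x. i \<in> K \<Longrightarrow> x \<in> space D \<Longrightarrow> \<bar>f i x\<bar> \<le> c" and "c > 0"
    and K: "finite K" "K \<noteq> {}" and I: "finite I" "I \<noteq> {}"
    and \<delta>: "0 < \<delta>" "\<delta> \<le> 1"
  defines "t \<equiv> c * sqrt (2 * ln (2 * card K / \<delta>) / card I)"
  shows "\<exists>E \<in> sets (PiM I (\<lambda>_. D)). measure (PiM I (\<lambda>_. D)) E \<ge> 1 - \<delta> \<and>
           (\<forall>S\<in>E. \<forall>i\<in>K. \<bar>(\<Sum>j\<in>I. f i (S j)) / card I - integral\<^sup>L D (f i)\<bar> \<le> t)"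
proof -
  let ?P = "PiM I (\<lambda>_. D)"
  interpret P: prob_space ?P using D by (rule prob_space_PiM)
  define L where "L = ln (2 * card K / \<delta>)"
  define Bad where
    "Bad i = {S \<in> space ?P. \<bar>(\<Sum>j\<in>I. f i (S j)) / card I - integral\<^sup>L D (f i)\<bar> \<ge> t}" for i
  have "card K \<ge> 1" using K by (simp add: Suc_leI card_gt_0_iff)
  then have "2 * card K / \<delta> > 1" using \<delta> by (simp add: field_simps)
  then have L_pos: "L > 0" unfolding L_def by simp
  have t_sq: "t\<^sup>2 = c\<^sup>2 * (2 * L / card I)"
    unfolding t_def using L_pos by (simp add: power_mult_distrib L_def)
  have Bad_sets: "Bad i \<in> sets ?P" if "i \<in> K" for i
  proof -
    have "(\<lambda>S. f i (S j)) \<in> borel_measurable ?P" if "j \<in> I" for j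
      using measurable_compose[OF measurable_component_singleton[OF that] f[OF \<open>i \<in> K\<close>]] by simp
    then show ?thesis unfolding Bad_def by measurable
  qed
  have Bad_prob: "measure ?P (Bad i) \<le> \<delta> / card K" if "i \<in> K" for i
  proof -
    have "measure ?P (Bad i) \<le> 2 * exp (-2 * card I * t\<^sup>2 / (c - - c)\<^sup>2)"
      unfolding Bad_def
    proof (rule Hoeffding_PiM_abs_ge[OF D f[OF that] _ _ I])
      show "f i x \<in> {-c..c}" if "x \<in> space D" for x
        using f_bound[OF \<open>i \<in> K\<close> that] by (simp add: abs_le_iff)
      show "t \<ge> 0" unfolding t_def using \<open>c > 0\<close> L_pos by (simp add: L_def)
    qed (use \<open>c > 0\<close> in simp)
    also have "-2 * card I * t\<^sup>2 / (c - - c)\<^sup>2 = - L"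
      using t_sq \<open>c > 0\<close> I by (simp add: power2_eq_square field_simps)
    also have "2 * exp (- L) = \<delta> / card K"
      unfolding L_def using \<delta> K by (simp add: exp_minus card_gt_0_iff)
    finally show ?thesis .
  qed
  define E where "E = space ?P - (\<Union>i\<in>K. Bad i)"
  have Bad_union: "(\<Union>i\<in>K. Bad i) \<in> sets ?P" using Bad_sets K by (intro sets.finite_UN) auto
  have "measure ?P (\<Union>i\<in>K. Bad i) \<le> (\<Sum>i\<in>K. measure ?P (Bad i))"
    by (rule measure_UNION_le) (use K Bad_sets in auto)
  also have "\<dots> \<le> (\<Sum>i\<in>K. \<delta> / card K)"
    by (rule sum_mono) (rule Bad_prob)
  also have "\<dots> = \<delta>" using K by simp
  finally have "measure ?P E \<ge> 1 - \<delta>"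
    unfolding E_def using P.prob_compl[OF Bad_union] by simp
  moreover have "E \<in> sets ?P" unfolding E_def using Bad_union by blast
  moreover have "\<forall>S\<in>E. \<forall>i\<in>K. \<bar>(\<Sum>j\<in>I. f i (S j)) / card I - integral\<^sup>L D (f i)\<bar> \<le> t"
    unfolding E_def Bad_def by force
  ultimately show ?thesis by blast
qed

definition residual :: "nat \<Rightarrow> mat \<Rightarrow> vec \<Rightarrow> vec \<Rightarrow> vec" where
  "residual d A b \<psi> = (\<lambda>r. (\<Sum>j<d. A r j * \<psi> j) - b r)"

definition residual_inner :: "nat \<Rightarrow> nat \<Rightarrow> mat \<Rightarrow> vec \<Rightarrow> vec \<Rightarrow> vec \<Rightarrow> real" where
  "residual_inner g d A b \<psi> \<psi>' = (\<Sum>r<g. residual d A b \<psi> r * residual d A b \<psi>' r)"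

lemma sqloss_eq_residual_inner: "sqloss g d A b \<psi> = residual_inner g d A b \<psi> \<psi>"
  unfolding sqloss_def residual_inner_def residual_def by (simp add: power2_eq_square)

lemma abs_residual_inner_le:
  "\<bar>residual_inner g d A b \<psi> \<psi>'\<bar> \<le> (sqloss g d A b \<psi> + sqloss g d A b \<psi>') / 2"
proof -
  have am_gm: "\<bar>u\<bar> * \<bar>v\<bar> \<le> (u\<^sup>2 + v\<^sup>2) / 2" for u v :: real
    using sum_squares_bound[of "\<bar>u\<bar>" "\<bar>v\<bar>"] by simp
  have "\<bar>residual_inner g d A b \<psi> \<psi>'\<bar> \<le> (\<Sum>r<g. \<bar>residual d A b \<psi> r\<bar> * \<bar>residual d A b \<psi>' r\<bar>)"
    unfolding residual_inner_def abs_mult[symmetric] by (rule sum_abs)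
  also have "\<dots> \<le> (\<Sum>r<g. ((residual d A b \<psi> r)\<^sup>2 + (residual d A b \<psi>' r)\<^sup>2) / 2)"
    by (intro sum_mono am_gm)
  also have "\<dots> = (sqloss g d A b \<psi> + sqloss g d A b \<psi>') / 2"
    unfolding sqloss_def residual_def by (simp add: sum_divide_distrib[symmetric] sum.distrib)
  finally show ?thesis .
qed

lemma residual_comb:
  assumes "(\<Sum>i<k. \<omega> i) = 1"
  shows "residual d A b (comb k \<phi> \<omega>) r = (\<Sum>i<k. \<omega> i * residual d A b (\<phi> i) r)"
proof -
  have "(\<Sum>j<d. A r j * comb k \<phi> \<omega> j) = (\<Sum>i<k. \<omega> i * (\<Sum>j<d. A r j * \<phi> i j))"
    unfolding comb_def by (simp add: sum_distrib_left mult_ac sum.swap[of _ "{..<d}"])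
  moreover have "b r = (\<Sum>i<k. \<omega> i * b r)"
    using assms by (simp add: sum_distrib_right[symmetric])
  ultimately show ?thesis
    unfolding residual_def by (simp add: right_diff_distrib sum_subtractf)
qed

lemma sqloss_comb:
  assumes "(\<Sum>i<k. \<omega> i) = 1"
  shows "sqloss g d A b (comb k \<phi> \<omega>)
           = (\<Sum>i<k. \<Sum>l<k. \<omega> i * \<omega> l * residual_inner g d A b (\<phi> i) (\<phi> l))"
proof -
  have "sqloss g d A b (comb k \<phi> \<omega>)
          = (\<Sum>r<g. \<Sum>i<k. \<Sum>l<k. \<omega> i * \<omega> l * (residual d A b (\<phi> i) r * residual d A b (\<phi> l) r))"
    unfolding sqloss_eq_residual_inner residual_inner_def residual_comb[OF assms]
    by (simp add: sum_product mult_ac)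
  also have "\<dots> = (\<Sum>i<k. \<Sum>l<k. \<omega> i * \<omega> l * residual_inner g d A b (\<phi> i) (\<phi> l))"
    unfolding residual_inner_def sum_distrib_left
    by (subst sum.swap) (simp add: sum.swap[of _ "{..<g}"])
  finally show ?thesis .
qed

lemma abs_simplex_quadratic_form_le:
  assumes "\<omega> \<in> wsimplex k" and "\<And>i l. i < k \<Longrightarrow> l < k \<Longrightarrow> \<bar>e i l\<bar> \<le> t"
  shows "\<bar>\<Sum>i<k. \<Sum>l<k. \<omega> i * \<omega> l * e i l\<bar> \<le> t"
proof -
  have nonneg: "\<And>i. i < k \<Longrightarrow> 0 \<le> \<omega> i" and total: "(\<Sum>i<k. \<omega> i) = 1"
    using assms(1) by (auto simp: wsimplex_def)
  have "\<bar>\<Sum>i<k. \<Sum>l<k. \<omega> i * \<omega> l * e i l\<bar> \<le> (\<Sum>i<k. \<Sum>l<k. \<bar>\<omega> i * \<omega> l * e i l\<bar>)"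
    by (rule order_trans[OF sum_abs sum_mono[OF sum_abs]])
  also have "\<dots> \<le> (\<Sum>i<k. \<Sum>l<k. \<omega> i * \<omega> l * t)"
    by (intro sum_mono) (simp add: abs_mult nonneg assms(2) mult_left_mono)
  also have "\<dots> = t * (\<Sum>i<k. \<omega> i) * (\<Sum>l<k. \<omega> l)"
    by (simp add: sum_distrib_left sum_distrib_right mult_ac)
  finally show ?thesis using total by simp
qed

lemma genL2_comb:
  assumes "(\<Sum>i<k. \<omega> i) = 1"
    and "\<And>i l. i < k \<Longrightarrow> l < k \<Longrightarrow> integrable D (\<lambda>x. residual_inner g d (fst x) (snd x) (\<phi> i) (\<phi> l))"
  shows "genL2 g d D (comb k \<phi> \<omega>)
           = (\<Sum>i<k. \<Sum>l<k. \<omega> i * \<omega> l * (\<integral>x. residual_inner g d (fst x) (snd x) (\<phi> i) (\<phi> l) \<partial>D))"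
proof -
  let ?R = "\<lambda>i l x. residual_inner g d (fst x) (snd x) (\<phi> i) (\<phi> l)"
  have row: "(\<integral>x. (\<Sum>l<k. \<omega> i * \<omega> l * ?R i l x) \<partial>D) = (\<Sum>l<k. \<omega> i * \<omega> l * integral\<^sup>L D (?R i l))"
    if "i < k" for i
    using assms(2)[OF that] by (subst Bochner_Integration.integral_sum) auto
  have "genL2 g d D (comb k \<phi> \<omega>) = (\<Sum>i<k. \<integral>x. (\<Sum>l<k. \<omega> i * \<omega> l * ?R i l x) \<partial>D)"
    unfolding genL2_def sqloss_comb[OF assms(1)] using assms(2)
    by (intro Bochner_Integration.integral_sum Bochner_Integration.integrable_sum) auto
  then show ?thesis using row by simp
qed

lemma empL2_comb:
  assumes "(\<Sum>i<k. \<omega> i) = 1"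
  shows "empL2 g d m S (comb k \<phi> \<omega>)
           = (\<Sum>i<k. \<Sum>l<k. \<omega> i * \<omega> l *
                ((\<Sum>j<m. residual_inner g d (fst (S j)) (snd (S j)) (\<phi> i) (\<phi> l)) / m))"
  unfolding empL2_def sqloss_comb[OF assms]
  by (simp add: sum_distrib_left sum_divide_distrib sum.swap[of _ "{..<m}"] mult_ac)

lemma abs_empL2_genL2_comb_le:
  assumes "\<omega> \<in> wsimplex k"
    and integrable: "\<And>i l. i < k \<Longrightarrow> l < k \<Longrightarrow>
           integrable D (\<lambda>x. residual_inner g d (fst x) (snd x) (\<phi> i) (\<phi> l))"
    and close: "\<And>i l. i < k \<Longrightarrow> l < k \<Longrightarrow>
           \<bar>(\<Sum>j<m. residual_inner g d (fst (S j)) (snd (S j)) (\<phi> i) (\<phi> l)) / m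
             - (\<integral>x. residual_inner g d (fst x) (snd x) (\<phi> i) (\<phi> l) \<partial>D)\<bar> \<le> t"
  shows "\<bar>empL2 g d m S (comb k \<phi> \<omega>) - genL2 g d D (comb k \<phi> \<omega>)\<bar> \<le> t"
proof -
  have total: "(\<Sum>i<k. \<omega> i) = 1" using assms(1) by (simp add: wsimplex_def)
  have "\<bar>\<Sum>i<k. \<Sum>l<k. \<omega> i * \<omega> l *
          ((\<Sum>j<m. residual_inner g d (fst (S j)) (snd (S j)) (\<phi> i) (\<phi> l)) / m
            - (\<integral>x. residual_inner g d (fst x) (snd x) (\<phi> i) (\<phi> l) \<partial>D))\<bar> \<le> t"
    by (rule abs_simplex_quadratic_form_le[OF assms(1) close])
  moreover have "genL2 g d D (comb k \<phi> \<omega>) = (\<Sum>i<k. \<Sum>l<k. \<omega> i * \<omega> l *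
                   (\<integral>x. residual_inner g d (fst x) (snd x) (\<phi> i) (\<phi> l) \<partial>D))"
    using integrable by (rule genL2_comb[OF total])
  ultimately show ?thesis
    unfolding empL2_comb[OF total] by (simp add: sum_subtractf right_diff_distrib)
qed

lemma excess_le_of_uniform_approx:
  fixes F G :: "'a \<Rightarrow> real"
  assumes "x \<in> W" and x_min: "\<And>y. y \<in> W \<Longrightarrow> F x \<le> F y"
    and approx: "\<And>y. y \<in> W \<Longrightarrow> \<bar>F y - G y\<bar> \<le> t"
  shows "G x - (INF y\<in>W. G y) \<le> 2 * t"
proof -
  have "G x - 2 * t \<le> (INF y\<in>W. G y)"
  proof (rule cINF_greatest)
    show "W \<noteq> {}" using \<open>x \<in> W\<close> by blast
    show "G x - 2 * t \<le> G y" if "y \<in> W" for y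
      using x_min[OF that] approx[OF that] approx[OF \<open>x \<in> W\<close>] by linarith
  qed
  then show ?thesis by simp
qed

lemma excess_genL2_le_whp:
  fixes c \<delta> :: real
  assumes k: "k \<ge> 1" and m: "m \<ge> 1" and D: "prob_space D"
    and A_measurable [measurable]: "\<And>i j. (\<lambda>x. fst x i j) \<in> borel_measurable D"
    and b_measurable [measurable]: "\<And>i. (\<lambda>x. snd x i) \<in> borel_measurable D"
    and loss_bound: "\<And>x l. x \<in> space D \<Longrightarrow> l < k \<Longrightarrow> sqloss g d (fst x) (snd x) (\<phi> l) \<le> c"
    and "c > 0"
    and \<omega>hat: "\<And>S. S \<in> space (PiM {..<m} (\<lambda>_. D)) \<Longrightarrow> \<omega>hat S \<in> wsimplex k \<and>
           (\<forall>\<omega>\<in>wsimplex k. empL2 g d m S (comb k \<phi> (\<omega>hat S)) \<le> empL2 g d m S (comb k \<phi> \<omega>))"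
    and \<delta>: "0 < \<delta>" "\<delta> \<le> 1"
  shows "\<exists>E\<in>sets (PiM {..<m} (\<lambda>_. D)). measure (PiM {..<m} (\<lambda>_. D)) E \<ge> 1 - \<delta> \<and>
           (\<forall>S\<in>E. genL2 g d D (comb k \<phi> (\<omega>hat S)) - (INF \<omega>\<in>wsimplex k. genL2 g d D (comb k \<phi> \<omega>))
                  \<le> 2 * c * sqrt (2 * ln (2 * real k ^ 2 / \<delta>) / m))"
proof -
  interpret D: prob_space D by (rule D)
  define R where "R p = (\<lambda>x. residual_inner g d (fst x) (snd x) (\<phi> (fst p)) (\<phi> (snd p)))" for p
  define t where "t = c * sqrt (2 * ln (2 * real k ^ 2 / \<delta>) / m)"
  have R_measurable: "R p \<in> borel_measurable D" for p
    unfolding R_def residual_inner_def residual_def by measurable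
  have R_bound: "\<bar>R p x\<bar> \<le> c" if "p \<in> {..<k} \<times> {..<k}" "x \<in> space D" for p x
    using abs_residual_inner_le[of g d "fst x" "snd x" "\<phi> (fst p)" "\<phi> (snd p)"]
      loss_bound[OF that(2), of "fst p"] loss_bound[OF that(2), of "snd p"] that(1)
    unfolding R_def by auto
  have R_integrable: "integrable D (R (i, l))" if "i < k" "l < k" for i l
    using R_bound[of "(i, l)"] that by (intro D.integrable_const_bound[where B = c]) (auto simp: R_measurable)
  obtain E where E: "E \<in> sets (PiM {..<m} (\<lambda>_. D))" "measure (PiM {..<m} (\<lambda>_. D)) E \<ge> 1 - \<delta>"
    and R_close: "\<And>S p. S \<in> E \<Longrightarrow> p \<in> {..<k} \<times> {..<k} \<Longrightarrow>
                    \<bar>(\<Sum>j<m. R p (S j)) / m - integral\<^sup>L D (R p)\<bar> \<le> t"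
    using Hoeffding_PiM_uniform[where K = "{..<k} \<times> {..<k}" and I = "{..<m}" and f = R,
        OF D R_measurable R_bound \<open>c > 0\<close> _ _ _ _ \<delta>] k m
    by (fastforce simp: t_def power2_eq_square lessThan_empty_iff)
  have "genL2 g d D (comb k \<phi> (\<omega>hat S)) - (INF \<omega>\<in>wsimplex k. genL2 g d D (comb k \<phi> \<omega>)) \<le> 2 * t"
    if "S \<in> E" for S
  proof (rule excess_le_of_uniform_approx)
    have "S \<in> space (PiM {..<m} (\<lambda>_. D))" using sets.sets_into_space[OF E(1)] that by blast
    then show "\<omega>hat S \<in> wsimplex k"
      and "\<And>\<omega>. \<omega> \<in> wsimplex k \<Longrightarrow> empL2 g d m S (comb k \<phi> (\<omega>hat S)) \<le> empL2 g d m S (comb k \<phi> \<omega>)"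
      using \<omega>hat by blast+
    show "\<bar>empL2 g d m S (comb k \<phi> \<omega>) - genL2 g d D (comb k \<phi> \<omega>)\<bar> \<le> t" if "\<omega> \<in> wsimplex k" for \<omega>
      using R_integrable R_close[OF \<open>S \<in> E\<close>]
      by (intro abs_empL2_genL2_comb_le[OF that]) (auto simp: R_def)
  qed
  then show ?thesis using E unfolding t_def by (auto simp: mult.assoc)
qed

lemma ln_confidence_le:
  fixes \<delta> :: real
  assumes "k \<ge> 1" "0 < \<delta>" "\<delta> < 1"
  shows "ln (2 * real k ^ 2 / \<delta>) \<le> 2 * ln (16 * real k / \<delta>)"
proof -
  have "2 * real k ^ 2 / \<delta> \<le> (16 * real k / \<delta>) ^ 2"
    using assms by (simp add: power2_eq_square field_simps)
  then have "ln (2 * real k ^ 2 / \<delta>) \<le> ln ((16 * real k / \<delta>) ^ 2)"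
    using assms by (intro ln_mono) auto
  then show ?thesis using assms by (simp add: ln_realpow)
qed

theorem theorem4p3:
  fixes c1 c2 :: real
  shows "\<exists>C>0. \<forall>(d::nat) (g::nat) (k::nat) (\<phi>::nat \<Rightarrow> vec) (D::(mat \<times> vec) measure)
            (m::nat) (\<omega>hat::(nat \<Rightarrow> mat \<times> vec) \<Rightarrow> (nat \<Rightarrow> real)) (\<delta>::real).
     k \<ge> 1 \<longrightarrow> m \<ge> 1 \<longrightarrow>
     (\<forall>l<k. \<forall>j<d. 0 \<le> \<phi> l j \<and> \<phi> l j \<le> 1) \<longrightarrow>
     prob_space D \<longrightarrow>
     (\<forall>i j. (\<lambda>x. fst x i j) \<in> borel_measurable D) \<longrightarrow>
     (\<forall>i. (\<lambda>x. snd x i) \<in> borel_measurable D) \<longrightarrow>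
     (\<forall>x\<in>space D. mat_l1 g d (fst x) \<le> c1) \<longrightarrow>
     (\<forall>x\<in>space D. \<forall>l<k. sqloss g d (fst x) (snd x) (\<phi> l) \<le> c2) \<longrightarrow>
     (\<forall>S\<in>space (PiM {..<m} (\<lambda>_. D)).
         \<omega>hat S \<in> wsimplex k \<and>
         (\<forall>\<omega>\<in>wsimplex k. empL2 g d m S (comb k \<phi> (\<omega>hat S)) \<le> empL2 g d m S (comb k \<phi> \<omega>))) \<longrightarrow>
     0 < \<delta> \<longrightarrow> \<delta> < 1 \<longrightarrow>
     (\<exists>E\<in>sets (PiM {..<m} (\<lambda>_. D)).
         measure (PiM {..<m} (\<lambda>_. D)) E \<ge> 1 - \<delta> \<and>
         (\<forall>S\<in>E. genL2 g d D (comb k \<phi> (\<omega>hat S))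
                    - (INF \<omega>\<in>wsimplex k. genL2 g d D (comb k \<phi> \<omega>))
                  \<le> C * sqrt (4 * ln (16 * real k / \<delta>) / real m)))"
proof (intro exI[of _ "2 * (\<bar>c2\<bar> + 1)"] conjI allI impI)
  fix d g k :: nat and \<phi> :: "nat \<Rightarrow> vec" and D :: "(mat \<times> vec) measure" and m :: nat
    and \<omega>hat :: "(nat \<Rightarrow> mat \<times> vec) \<Rightarrow> nat \<Rightarrow> real" and \<delta> :: real
  assume k: "k \<ge> 1" and m: "m \<ge> 1"
    and "\<forall>l<k. \<forall>j<d. 0 \<le> \<phi> l j \<and> \<phi> l j \<le> 1"
    and D: "prob_space D"
    and A_measurable: "\<forall>i j. (\<lambda>x. fst x i j) \<in> borel_measurable D"
    and b_measurable: "\<forall>i. (\<lambda>x. snd x i) \<in> borel_measurable D"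
    and "\<forall>x\<in>space D. mat_l1 g d (fst x) \<le> c1"
    and loss_bound: "\<forall>x\<in>space D. \<forall>l<k. sqloss g d (fst x) (snd x) (\<phi> l) \<le> c2"
    and \<omega>hat: "\<forall>S\<in>space (PiM {..<m} (\<lambda>_. D)). \<omega>hat S \<in> wsimplex k \<and>
         (\<forall>\<omega>\<in>wsimplex k. empL2 g d m S (comb k \<phi> (\<omega>hat S)) \<le> empL2 g d m S (comb k \<phi> \<omega>))"
    and \<delta>: "0 < \<delta>" "\<delta> < 1"
  have loss_le: "sqloss g d (fst x) (snd x) (\<phi> l) \<le> \<bar>c2\<bar> + 1" if "x \<in> space D" "l < k" for x l
    using loss_bound that by force
  have whp: "\<exists>E\<in>sets (PiM {..<m} (\<lambda>_. D)). measure (PiM {..<m} (\<lambda>_. D)) E \<ge> 1 - \<delta> \<and>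
      (\<forall>S\<in>E. genL2 g d D (comb k \<phi> (\<omega>hat S)) - (INF \<omega>\<in>wsimplex k. genL2 g d D (comb k \<phi> \<omega>))
              \<le> 2 * (\<bar>c2\<bar> + 1) * sqrt (2 * ln (2 * real k ^ 2 / \<delta>) / m))"
    using loss_le \<omega>hat \<delta>
    by (intro excess_genL2_le_whp[OF k m D]) (auto simp: A_measurable b_measurable)
  have "sqrt (2 * ln (2 * real k ^ 2 / \<delta>) / m) \<le> sqrt (4 * ln (16 * real k / \<delta>) / m)"
    using ln_confidence_le[OF k \<delta>] by (simp add: divide_right_mono)
  then have "2 * (\<bar>c2\<bar> + 1) * sqrt (2 * ln (2 * real k ^ 2 / \<delta>) / m)
               \<le> 2 * (\<bar>c2\<bar> + 1) * sqrt (4 * ln (16 * real k / \<delta>) / m)"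
    by (simp add: mult_left_mono)
  with whp show "\<exists>E\<in>sets (PiM {..<m} (\<lambda>_. D)). measure (PiM {..<m} (\<lambda>_. D)) E \<ge> 1 - \<delta> \<and>
      (\<forall>S\<in>E. genL2 g d D (comb k \<phi> (\<omega>hat S)) - (INF \<omega>\<in>wsimplex k. genL2 g d D (comb k \<phi> \<omega>))
              \<le> 2 * (\<bar>c2\<bar> + 1) * sqrt (4 * ln (16 * real k / \<delta>) / real m))"
    by (meson order_trans)
qed simp

end
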